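(* Let $N\ge 2$, $1\le Q<N$, $P\in\mathbb{C}^{N\times Q}$, let $x=(x_1,\dots,x_N)^T\in\mathbb{C}^N$ with $x_2,\dots,x_{Q+1}$ nonzero, $X=\mathrm{diag}(x)$, and let $S\in\mathbb{C}^{Q\times Q}$ be invertible with entries $S_{mq}$. Let $\mathcal{J}=\{1,\dots,N\}\cup\bigcup_{m=2}^{Q}\{(m-1)N+1,\dots,(m-1)N+Q+1\}$ and let $\tilde P=P_{\{1,\dots,Q+1\},:}$. Then $$\Big|\det\big[\,[I_Q\otimes XP]_{\mathcal{J},:}\ \ [(S\otimes I_N)D(P)]_{\mathcal{J},\{2,\dots,N\}}\,\big]\Big| =\prod_{j=Q+2}^{N}\Big|\sum_{q=1}^{Q}S_{1q}P_{jq}\Big|\ \prod_{k=1}^{5}|\det M_k|,$$ where $\tilde X=\mathrm{diag}(x_1,\dots,x_{Q+1})$ and $M_1=I_Q\otimes\tilde X$, $M_2=S\otimes I_{Q+1}$, $M_3=\big[\,I_Q\otimes\tilde P\ \ [D(\tilde P)]_{:,\{2,\dots,Q+1\}}\,\big]$, $M_4=\begin{bmatrix}S^{-1}\otimes I_Q&0\\0&I_Q\end{bmatrix}$, $M_5=\begin{bmatrix}I_{Q^2}&0\\0&\mathrm{diag}(x_2,\dots,x_{Q+1})^{-1}\end{bmatrix}$.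
   Context: For a $K\times L$ matrix $B$ with entries $b_{ij}$, $D(B)$ denotes the $KL\times K$ matrix obtained by stacking vertically $\mathrm{diag}(b_{11},\dots,b_{K1}),\dots,\mathrm{diag}(b_{1L},\dots,b_{KL})$. For a matrix $B$ and index sets $\mathcal{I},\mathcal{S}$, $[B]_{\mathcal{I},\mathcal{S}}$ is the submatrix with rows in $\mathcal{I}$ and columns in $\mathcal{S}$; ":" means all rows/columns. $\otimes$ is the Kronecker product, with ordinary matrix products taking precedence over it (e.g. $I_Q\otimes XP=I_Q\otimes(XP)$). The matrix on the left is square of size $N-1+Q^2$. *)

theory Defs
  imports "Jordan_Normal_Form.DL_Submatrix" "Jordan_Normal_Form.Determinant"
begin

text \<open>All matrices are 0-indexed Jordan_Normal_Form matrices; the paper's 1-based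
indices are shifted by one.\<close>

definition kron :: "'a::times mat \<Rightarrow> 'a mat \<Rightarrow> 'a mat" where
  "kron A B = mat (dim_row A * dim_row B) (dim_col A * dim_col B)
     (\<lambda>(i,j). A $$ (i div dim_row B, j div dim_col B) * B $$ (i mod dim_row B, j mod dim_col B))"

definition diagm :: "nat \<Rightarrow> (nat \<Rightarrow> 'a::zero) \<Rightarrow> 'a mat" where
  "diagm n d = mat n n (\<lambda>(i,j). if i = j then d i else 0)"

text \<open>D(B): for K x L matrix B, the KL x K matrix stacking diag(b_{1l},...,b_{Kl}), l = 1..L.\<close>
definition Dmat :: "'a::zero mat \<Rightarrow> 'a mat" where
  "Dmat B = mat (dim_row B * dim_col B) (dim_row B)
     (\<lambda>(r,j). if r mod dim_row B = j then B $$ (j, r div dim_row B) else 0)"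

definition hcat :: "'a::zero mat \<Rightarrow> 'a mat \<Rightarrow> 'a mat" where
  "hcat A B = mat (dim_row A) (dim_col A + dim_col B)
     (\<lambda>(i,j). if j < dim_col A then A $$ (i,j) else B $$ (i, j - dim_col A))"

definition bdiag :: "'a::zero mat \<Rightarrow> 'a mat \<Rightarrow> 'a mat" where
  "bdiag A B = four_block_mat A (0\<^sub>m (dim_row A) (dim_col B)) (0\<^sub>m (dim_row B) (dim_col A)) B"

definition mat_inv :: "'a::semiring_1 mat \<Rightarrow> 'a mat" where
  "mat_inv A = (SOME B. B \<in> carrier_mat (dim_row A) (dim_row A) \<and>
      A * B = 1\<^sub>m (dim_row A) \<and> B * A = 1\<^sub>m (dim_row A))"

end

theory Submission
  imports Defs
begin

text \<open>
  Write \<open>G\<close> for the "stacked" matrix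
  \<open>[I_Q \<otimes> XP, ((S \<otimes> I_N) D(P))_{:,2..N}]\<close> of size \<open>QN \<times> (Q\<^sup>2+N-1)\<close>
  (the constant \<open>stack_mat\<close> below).  The matrix of the theorem is the row
  selection \<open>G_{J,:}\<close>, and the proof has three steps.

  (1) Enumerate \<open>J\<close> in a convenient order: first the \<open>Q\<close> blocks of rows
      \<open>mN, ..., mN+Q\<close> (\<open>m < Q\<close>), then the remaining rows \<open>Q+1, ..., N-1\<close> of the
      first block.  Reordering rows only changes the sign of the determinant.
  (2) In this order the matrix is block lower triangular: its upper-left block is the
      stacked matrix of the truncated data \<open>(Q+1, x, P_{1..Q+1,:})\<close>, its upper-right block
      vanishes and its lower-right block is diagonal with entries
      \<open>\<Sum>_q S_{1q} P_{jq}\<close>, \<open>j = Q+2..N\<close>.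
  (3) The truncated stacked matrix factors as \<open>M2 M1 M3 M4 M5\<close>, by the mixed-product
      rule for \<open>\<otimes>\<close>, by moving the diagonal scaling through \<open>D(P)\<close>, and by
      \<open>S S\<^sup>-\<^sup>1 = I\<close>; so its determinant is the product of the five determinants.
\<close>

lemma sum_lessThan_mult:
  fixes f :: "nat \<Rightarrow> 'a::comm_monoid_add"
  shows "(\<Sum>k<a*b. f k) = (\<Sum>u<a. \<Sum>v<b. f (u*b+v))"
  by (simp add: sum.nat_group[symmetric] sum.atLeastLessThan_shift_0 atLeast0LessThan comp_def)

lemma mult_add_less_mult: "u < (a::nat) \<Longrightarrow> v < b \<Longrightarrow> u*b+v < a*b"
proof -
  assume "u < a" "v < b"
  then have "Suc u * b \<le> a * b" by (intro mult_right_mono) auto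
  then show ?thesis using \<open>v < b\<close> by simp
qed

lemma mult_add_div: "v < (b::nat) \<Longrightarrow> (u * b + v) div b = u"
  and mult_add_mod: "v < (b::nat) \<Longrightarrow> (u * b + v) mod b = v"
  by simp_all

text \<open>\<open>pick I\<close>, used by \<open>submatrix\<close>, enumerates a finite set
  \<open>I\<close> in increasing order.\<close>
lemma bij_betw_pick:
  assumes "finite I" shows "bij_betw (pick I) {..<card I} I"
proof -
  have "inj_on (pick I) {..<card I}"
    by (rule inj_onI) (metis lessThan_iff nat_neq_iff pick_mono_le)
  moreover have "pick I ` {..<card I} \<subseteq> I" using pick_in_set_le by auto
  ultimately show ?thesis using assms
    by (metis bij_betw_def card_image card_lessThan card_subset_eq)
qed

lemma pick_atLeastLessThan: assumes "j < b - a" shows "pick {a..<b} j = a + j"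
proof -
  have "{x \<in> {a..<b}. x < a + j} = {a..<a+j}" using assms by auto
  then show ?thesis using pick_card_in_set[of "a+j" "{a..<b}"] assms by simp
qed

lemma mult_mat_index_sum:
  assumes "i < dim_row A" "j < dim_col B" "dim_col A = dim_row B"
  shows "(A * B) $$ (i,j) = (\<Sum>k<dim_col A. A $$ (i,k) * B $$ (k,j))"
  using assms by (auto simp: scalar_prod_def atLeast0LessThan intro!: sum.cong)

lemma kron_dims [simp]:
  "dim_row (kron A B) = dim_row A * dim_row B" "dim_col (kron A B) = dim_col A * dim_col B"
  by (simp_all add: kron_def)

lemma kron_index:
  assumes "i < dim_row A * dim_row B" "j < dim_col A * dim_col B"
  shows "kron A B $$ (i,j) = A $$ (i div dim_row B, j div dim_col B) * B $$ (i mod dim_row B, j mod dim_col B)"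
  using assms by (simp add: kron_def)

lemma kron_mult:
  fixes A B C D :: "'a::comm_semiring_1 mat"
  assumes "dim_col A = dim_row C" "dim_col B = dim_row D"
  shows "kron A B * kron C D = kron (A * C) (B * D)"
proof (rule eq_matI)
  fix i j assume "i < dim_row (kron (A*C) (B*D))" and "j < dim_col (kron (A*C) (B*D))"
  then have i: "i < dim_row A * dim_row B" and j: "j < dim_col C * dim_col D" by auto
  then have "0 < dim_row B" "0 < dim_col D" by (auto intro!: gr0I)
  then have i_mod: "i mod dim_row B < dim_row B" and j_mod: "j mod dim_col D < dim_col D" by auto
  have i_div: "i div dim_row B < dim_row A" and j_div: "j div dim_col D < dim_col C"
    using i j by (simp_all add: less_mult_imp_div_less)
  have "(kron A B * kron C D) $$ (i,j) = (\<Sum>k<dim_col A * dim_col B. kron A B $$ (i,k) * kron C D $$ (k,j))"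
    using i j assms by (simp add: mult_mat_index_sum del: index_mult_mat(1))
  also have "\<dots> = (\<Sum>u<dim_col A. \<Sum>v<dim_col B.
      (A $$ (i div dim_row B, u) * C $$ (u, j div dim_col D)) * (B $$ (i mod dim_row B, v) * D $$ (v, j mod dim_col D)))"
    unfolding sum_lessThan_mult
  proof (intro sum.cong refl)
    fix u v assume "u \<in> {..<dim_col A}" and v: "v \<in> {..<dim_col B}"
    then have "u * dim_col B + v < dim_col A * dim_col B" by (simp add: mult_add_less_mult)
    moreover have "(u * dim_col B + v) div dim_col B = u" "(u * dim_col B + v) mod dim_col B = v"
      using v by auto
    ultimately show "kron A B $$ (i, u * dim_col B + v) * kron C D $$ (u * dim_col B + v, j) =
        (A $$ (i div dim_row B, u) * C $$ (u, j div dim_col D)) * (B $$ (i mod dim_row B, v) * D $$ (v, j mod dim_col D))"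
      using i j assms by (simp add: kron_index ac_simps)
  qed
  also have "\<dots> = kron (A * C) (B * D) $$ (i,j)"
    using i j i_div j_div i_mod j_mod assms
    by (simp add: kron_index mult_mat_index_sum sum_product del: index_mult_mat(1))
  finally show "(kron A B * kron C D) $$ (i,j) = kron (A * C) (B * D) $$ (i,j)" .
qed (use assms in simp_all)

lemma diagm_carrier [simp]: "diagm n d \<in> carrier_mat n n"
  and diagm_dims [simp]: "dim_row (diagm n d) = n" "dim_col (diagm n d) = n"
  by (simp_all add: diagm_def)

lemma diagm_index: "i < n \<Longrightarrow> j < n \<Longrightarrow> diagm n d $$ (i,j) = (if i = j then d i else 0)"
  by (simp add: diagm_def)

lemma one_mat_diagm: "1\<^sub>m n = diagm n (\<lambda>_. 1)"
  by (rule eq_matI) (auto simp: diagm_index)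

lemma diagm_mult:
  fixes B :: "'a::semiring_0 mat"
  assumes "dim_row B = n"
  shows "diagm n d * B = mat n (dim_col B) (\<lambda>(i,j). d i * B $$ (i,j))"
proof (rule eq_matI)
  fix i j assume "i < dim_row (mat n (dim_col B) (\<lambda>(i,j). d i * B $$ (i,j)))"
    and "j < dim_col (mat n (dim_col B) (\<lambda>(i,j). d i * B $$ (i,j)))"
  then have i: "i < n" and j: "j < dim_col B" by auto
  have "(diagm n d * B) $$ (i,j) = (\<Sum>k<n. diagm n d $$ (i,k) * B $$ (k,j))"
    using i j assms by (simp add: mult_mat_index_sum del: index_mult_mat(1))
  also have "\<dots> = (\<Sum>k<n. if k = i then d i * B $$ (i,j) else 0)"
    using i by (intro sum.cong refl) (auto simp: diagm_index)
  finally show "(diagm n d * B) $$ (i,j) = mat n (dim_col B) (\<lambda>(i,j). d i * B $$ (i,j)) $$ (i,j)"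
    using i j by simp
qed (use assms in simp_all)

lemma mult_diagm:
  fixes B :: "'a::semiring_0 mat"
  assumes "dim_col B = n"
  shows "B * diagm n d = mat (dim_row B) n (\<lambda>(i,j). B $$ (i,j) * d j)"
proof (rule eq_matI)
  fix i j assume "i < dim_row (mat (dim_row B) n (\<lambda>(i,j). B $$ (i,j) * d j))"
    and "j < dim_col (mat (dim_row B) n (\<lambda>(i,j). B $$ (i,j) * d j))"
  then have i: "i < dim_row B" and j: "j < n" by auto
  have "(B * diagm n d) $$ (i,j) = (\<Sum>k<n. B $$ (i,k) * diagm n d $$ (k,j))"
    using i j assms by (simp add: mult_mat_index_sum del: index_mult_mat(1))
  also have "\<dots> = (\<Sum>k<n. if k = j then B $$ (i,j) * d j else 0)"
    using j by (intro sum.cong refl) (auto simp: diagm_index)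
  finally show "(B * diagm n d) $$ (i,j) = mat (dim_row B) n (\<lambda>(i,j). B $$ (i,j) * d j) $$ (i,j)"
    using i j by simp
qed (use assms in simp_all)

lemma det_diagm: "det (diagm n d) = (\<Prod>i<n. d i)"
proof -
  have "det (diagm n d) = prod_list (diag_mat (diagm n d))"
    by (rule det_upper_triangular[of _ n]) (auto simp: upper_triangular_def diagm_index)
  then show ?thesis by (simp add: prod_list_diag_prod diagm_index atLeast0LessThan)
qed

lemma mat_inv_props:
  assumes A: "A \<in> carrier_mat n n" and inv: "invertible_mat A"
  shows "mat_inv A \<in> carrier_mat n n" "A * mat_inv A = 1\<^sub>m n" "mat_inv A * A = 1\<^sub>m n"
proof -
  obtain B where AB: "A * B = 1\<^sub>m (dim_row A)" and BA: "B * A = 1\<^sub>m (dim_row B)"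
    using inv unfolding invertible_mat_def inverts_mat_def by blast
  have "B \<in> carrier_mat n n"
    using A AB BA by (metis carrier_matD carrier_matI index_mult_mat(2,3) index_one_mat(2,3))
  then have "\<exists>B. B \<in> carrier_mat (dim_row A) (dim_row A) \<and> A * B = 1\<^sub>m (dim_row A) \<and> B * A = 1\<^sub>m (dim_row A)"
    using A AB BA by auto
  from someI_ex[OF this] show "mat_inv A \<in> carrier_mat n n" "A * mat_inv A = 1\<^sub>m n" "mat_inv A * A = 1\<^sub>m n"
    using A unfolding mat_inv_def by auto
qed

lemma mat_inv_unique:
  assumes A: "A \<in> carrier_mat n n" and B: "B \<in> carrier_mat n n"
    and AB: "A * B = 1\<^sub>m n" and BA: "B * A = 1\<^sub>m n"
  shows "mat_inv A = B"
proof -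
  have "invertible_mat A"
    using A B AB BA unfolding invertible_mat_def inverts_mat_def by auto
  note inv = mat_inv_props[OF A this]
  have "mat_inv A = mat_inv A * (A * B)" using inv(1) AB by simp
  also have "\<dots> = (mat_inv A * A) * B" using inv(1) A B by (simp add: assoc_mult_mat)
  finally show ?thesis using inv(3) B by simp
qed

lemma mat_inv_diagm:
  fixes d :: "nat \<Rightarrow> 'a::field"
  assumes "\<And>i. i < n \<Longrightarrow> d i \<noteq> 0"
  shows "mat_inv (diagm n d) = diagm n (\<lambda>i. inverse (d i))"
  by (rule mat_inv_unique) (auto simp: diagm_mult diagm_index assms intro!: eq_matI)

lemma hcat_dims [simp]:
  "dim_row (hcat A B) = dim_row A" "dim_col (hcat A B) = dim_col A + dim_col B"
  by (simp_all add: hcat_def)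

lemma hcat_index:
  "i < dim_row A \<Longrightarrow> j < dim_col A + dim_col B \<Longrightarrow>
   hcat A B $$ (i,j) = (if j < dim_col A then A $$ (i,j) else B $$ (i, j - dim_col A))"
  by (simp add: hcat_def)

lemma bdiag_dims [simp]:
  "dim_row (bdiag C D) = dim_row C + dim_row D" "dim_col (bdiag C D) = dim_col C + dim_col D"
  by (simp_all add: bdiag_def)

lemma mult_hcat:
  assumes "dim_col X = dim_row A" "dim_row B = dim_row A"
  shows "X * hcat A B = hcat (X * A) (X * B)"
  by (rule eq_matI) (use assms in \<open>auto simp: mult_mat_index_sum hcat_index simp del: index_mult_mat(1)\<close>)

lemma hcat_mult_bdiag:
  assumes "dim_col A = dim_row C" "dim_col B = dim_row D" "dim_row A = dim_row B"
  shows "hcat A B * bdiag C D = hcat (A * C) (B * D)"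
proof -
  have "hcat A B = four_block_mat A B (0\<^sub>m 0 (dim_col A)) (0\<^sub>m 0 (dim_col B))"
    using assms by (intro eq_matI) (auto simp: hcat_index)
  moreover have "four_block_mat A B (0\<^sub>m 0 (dim_col A)) (0\<^sub>m 0 (dim_col B)) * bdiag C D
      = four_block_mat (A * C) (B * D) (0\<^sub>m 0 (dim_col C)) (0\<^sub>m 0 (dim_col D))"
    unfolding bdiag_def using assms
    by (subst mult_four_block_mat[of _ "dim_row A" "dim_col A" _ "dim_col B" _ 0 _ _ "dim_col C" _ "dim_col D"])
       (auto intro!: carrier_matI cong_four_block_mat)
  moreover have "four_block_mat (A * C) (B * D) (0\<^sub>m 0 (dim_col C)) (0\<^sub>m 0 (dim_col D)) = hcat (A * C) (B * D)"
    using assms by (intro eq_matI) (auto simp: hcat_index)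
  ultimately show ?thesis by simp
qed

lemma hcat_submatrix_rows:
  assumes "dim_row A = dim_row B"
  shows "hcat (submatrix A I UNIV) (submatrix B I UNIV) = submatrix (hcat A B) I UNIV"
proof (rule eq_matI)
  fix i j assume "i < dim_row (submatrix (hcat A B) I UNIV)" and "j < dim_col (submatrix (hcat A B) I UNIV)"
  then have i: "i < card {i. i < dim_row A \<and> i \<in> I}" and j: "j < dim_col A + dim_col B"
    by (simp_all add: dim_submatrix)
  have "pick I i < dim_row A" using pick_le[OF i] .
  then show "hcat (submatrix A I UNIV) (submatrix B I UNIV) $$ (i,j) = submatrix (hcat A B) I UNIV $$ (i,j)"
    using i j assms by (simp add: hcat_index submatrix_index dim_submatrix pick_UNIV)
qed (use assms in \<open>simp_all add: dim_submatrix\<close>)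

lemma Dmat_dims [simp]: "dim_row (Dmat B) = dim_row B * dim_col B" "dim_col (Dmat B) = dim_row B"
  by (simp_all add: Dmat_def)

lemma Dmat_index: "r < dim_row B * dim_col B \<Longrightarrow> j < dim_row B \<Longrightarrow>
  Dmat B $$ (r,j) = (if r mod dim_row B = j then B $$ (j, r div dim_row B) else 0)"
  by (simp add: Dmat_def)

lemma kron_diagm_Dmat_index:
  fixes S R :: "'a::comm_semiring_1 mat"
  assumes S: "S \<in> carrier_mat m L" and R: "R \<in> carrier_mat n L" and r: "r < m * n" and j: "j < n"
  shows "(kron S (diagm n d) * Dmat R) $$ (r,j) =
    (if r mod n = j then d j * (\<Sum>u<L. S $$ (r div n, u) * R $$ (j,u)) else 0)"
proof -
  have r_mod: "r mod n < n" using j by simp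
  have "(kron S (diagm n d) * Dmat R) $$ (r,j) = (\<Sum>k<L*n. kron S (diagm n d) $$ (r,k) * Dmat R $$ (k,j))"
    using S R r j by (subst mult_mat_index_sum) (auto simp: mult.commute)
  also have "\<dots> = (\<Sum>u<L. \<Sum>v<n. if v = r mod n \<and> r mod n = j then S $$ (r div n, u) * d j * R $$ (j,u) else 0)"
    unfolding sum_lessThan_mult
  proof (intro sum.cong refl)
    fix u v assume "u \<in> {..<L}" and v: "v \<in> {..<n}"
    then have "u * n + v < L * n" by (simp add: mult_add_less_mult)
    moreover have "(u * n + v) div n = u" "(u * n + v) mod n = v" using v by auto
    ultimately show "kron S (diagm n d) $$ (r, u * n + v) * Dmat R $$ (u * n + v, j) =
        (if v = r mod n \<and> r mod n = j then S $$ (r div n, u) * d j * R $$ (j,u) else 0)"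
      using S R r r_mod v j by (auto simp: kron_index diagm_index Dmat_index mult.commute)
  qed
  also have "\<dots> = (if r mod n = j then d j * (\<Sum>u<L. S $$ (r div n, u) * R $$ (j,u)) else 0)"
    using r_mod by (simp add: sum_distrib_left ac_simps)
  finally show ?thesis .
qed

lemma kron_one_Dmat_index:
  fixes S R :: "'a::comm_semiring_1 mat"
  assumes "S \<in> carrier_mat m L" "R \<in> carrier_mat n L" "r < m * n" "j < n"
  shows "(kron S (1\<^sub>m n) * Dmat R) $$ (r,j) =
    (if r mod n = j then (\<Sum>u<L. S $$ (r div n, u) * R $$ (j,u)) else 0)"
  using kron_diagm_Dmat_index[OF assms, of "\<lambda>_. 1"] by (simp add: one_mat_diagm)

lemma kron_diagm_Dmat:
  fixes S R :: "'a::comm_semiring_1 mat"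
  assumes S: "S \<in> carrier_mat m L" and R: "R \<in> carrier_mat n L"
  shows "kron S (diagm n d) * Dmat R = kron S (1\<^sub>m n) * Dmat R * diagm n d"
proof (rule eq_matI)
  fix r j assume "r < dim_row (kron S (1\<^sub>m n) * Dmat R * diagm n d)"
    and "j < dim_col (kron S (1\<^sub>m n) * Dmat R * diagm n d)"
  then have r: "r < m * n" and j: "j < n" using S by auto
  show "(kron S (diagm n d) * Dmat R) $$ (r,j) = (kron S (1\<^sub>m n) * Dmat R * diagm n d) $$ (r,j)"
    using S R r j
    by (simp add: mult_diagm kron_diagm_Dmat_index[OF S R r j] kron_one_Dmat_index[OF S R r j]
        mult.commute[of "d j"])
qed (use S R in simp_all)

lemma mult_submatrix_cols:
  assumes "dim_col A = dim_row B"
  shows "A * submatrix B UNIV K = submatrix (A * B) UNIV K"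
proof (rule eq_matI)
  fix i j assume "i < dim_row (submatrix (A * B) UNIV K)" and "j < dim_col (submatrix (A * B) UNIV K)"
  then have i: "i < dim_row A" and j: "j < card {j. j < dim_col B \<and> j \<in> K}"
    by (simp_all add: dim_submatrix)
  have "pick K j < dim_col B" using pick_le[OF j] .
  then show "(A * submatrix B UNIV K) $$ (i,j) = submatrix (A * B) UNIV K $$ (i,j)"
    using i j assms by (simp add: mult_mat_index_sum submatrix_index dim_submatrix pick_UNIV del: index_mult_mat(1))
qed (use assms in \<open>simp_all add: dim_submatrix\<close>)

lemma submatrix_all_rows_dim [simp]: "dim_row (submatrix A UNIV K) = dim_row A"
  by (simp add: dim_submatrix)

lemma submatrix_interval_cols_dim [simp]:
  "dim_col A = n \<Longrightarrow> dim_col (submatrix A UNIV {a..<n}) = n - a"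
proof -
  assume "dim_col A = n"
  moreover have "{j. j < n \<and> j \<in> {a..<n}} = {a..<n}" by auto
  ultimately show ?thesis by (simp add: dim_submatrix)
qed

lemma submatrix_interval_cols_index:
  assumes "i < dim_row A" "j < n - a" "dim_col A = n"
  shows "submatrix A UNIV {a..<n} $$ (i,j) = A $$ (i, a + j)"
proof -
  have "{j. j < n \<and> j \<in> {a..<n}} = {a..<n}" by auto
  then show ?thesis using assms by (simp add: submatrix_index pick_UNIV pick_atLeastLessThan)
qed

lemma submatrix_mult_diagm_cols:
  assumes "dim_col Y = n"
  shows "submatrix (Y * diagm n d) UNIV {a..<n} = submatrix Y UNIV {a..<n} * diagm (n - a) (\<lambda>j. d (a + j))"
  by (rule eq_matI) (use assms in \<open>simp_all add: submatrix_interval_cols_index mult_diagm\<close>)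

lemma det_rows_reindex:
  fixes A :: "'a::comm_ring_1 mat"
  assumes rho: "bij_betw rho {..<n} I" and I: "I \<subseteq> {..<dim_row A}" and cols: "dim_col A = n"
  shows "\<exists>p. p permutes {0..<n} \<and>
    det (mat n n (\<lambda>(s,c). A $$ (rho s, c))) = signof p * det (submatrix A I UNIV)"
proof -
  have "finite I" using I finite_subset by blast
  moreover have card: "card I = n" using bij_betw_same_card[OF rho] by simp
  ultimately have pick: "bij_betw (pick I) {..<n} I" using bij_betw_pick by blast
  have rows: "{i. i < dim_row A \<and> i \<in> I} = I" using I by auto
  have "dim_row (submatrix A I UNIV) = n" unfolding dim_submatrix rows card ..
  moreover have "dim_col (submatrix A I UNIV) = n" using cols by (simp add: dim_submatrix)
  ultimately have sub: "submatrix A I UNIV \<in> carrier_mat n n" by blast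
  define p where "p s = (if s < n then the_inv_into {..<n} (pick I) (rho s) else s)" for s
  have "bij_betw (the_inv_into {..<n} (pick I) \<circ> rho) {..<n} {..<n}"
    using bij_betw_trans[OF rho bij_betw_the_inv_into[OF pick]] .
  then have p_bij: "bij_betw p {..<n} {..<n}"
    by (rule bij_betw_cong[THEN iffD1, rotated]) (simp add: p_def)
  then have perm: "p permutes {0..<n}"
    by (intro bij_imp_permutes) (simp_all add: atLeast0LessThan p_def)
  have p_lt: "p s < n" if "s < n" for s
    using bij_betwE[OF p_bij] that by auto
  have pick_p: "pick I (p s) = rho s" if "s < n" for s
    using that f_the_inv_into_f_bij_betw[OF pick] bij_betwE[OF rho] by (simp add: p_def)
  have "mat n n (\<lambda>(s,c). A $$ (rho s, c)) = mat n n (\<lambda>(s,c). submatrix A I UNIV $$ (p s, c))"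
    using rows card cols pick_p p_lt by (intro eq_matI) (simp_all add: submatrix_index pick_UNIV)
  then show ?thesis using det_permute_rows[OF sub perm] perm by auto
qed

definition stack_mat :: "nat \<Rightarrow> nat \<Rightarrow> 'a::comm_semiring_1 mat \<Rightarrow> (nat \<Rightarrow> 'a) \<Rightarrow> 'a mat \<Rightarrow> 'a mat" where
  "stack_mat Q n S d P =
     hcat (kron (1\<^sub>m Q) (diagm n d * P)) (submatrix (kron S (1\<^sub>m n) * Dmat P) UNIV {1..<n})"

lemma stack_mat_carrier:
  assumes "S \<in> carrier_mat Q Q" "P \<in> carrier_mat n Q"
  shows "stack_mat Q n S d P \<in> carrier_mat (Q * n) (Q * Q + (n - 1))"
  by (rule carrier_matI) (use assms in \<open>simp_all add: stack_mat_def\<close>)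

lemma stack_mat_index:
  assumes S: "S \<in> carrier_mat Q Q" and P: "P \<in> carrier_mat n Q"
    and r: "r < Q * n" and c: "c < Q * Q + (n - 1)"
  shows "stack_mat Q n S d P $$ (r,c) =
    (if c < Q * Q then (if r div n = c div Q then d (r mod n) * P $$ (r mod n, c mod Q) else 0)
     else if r mod n = c + 1 - Q * Q then (\<Sum>u<Q. S $$ (r div n, u) * P $$ (c + 1 - Q * Q, u)) else 0)"
proof -
  have "0 < n" "0 < Q" using r by (auto intro!: gr0I)
  then have r_div: "r div n < Q" and r_mod: "r mod n < n" using r by (simp_all add: less_mult_imp_div_less)
  show ?thesis
  proof (cases "c < Q * Q")
    case True
    then have "c div Q < Q" "c mod Q < Q" using \<open>0 < Q\<close> by (simp_all add: less_mult_imp_div_less)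
    with True show ?thesis using S P r r_div r_mod
      by (simp add: stack_mat_def hcat_index kron_index diagm_mult)
  next
    case False
    then have col: "c - Q * Q < n - 1" "1 + (c - Q * Q) = c + 1 - Q * Q" using c by auto
    have "stack_mat Q n S d P $$ (r,c) = (kron S (1\<^sub>m n) * Dmat P) $$ (r, c + 1 - Q * Q)"
      using False S P r col
      by (simp add: stack_mat_def hcat_index submatrix_interval_cols_index mult.commute
          del: index_mult_mat(1))
    then show ?thesis
      using False r col kron_one_Dmat_index[OF S P, of r "c + 1 - Q * Q"] by simp
  qed
qed

text \<open>The first two factors give \<open>S \<otimes> diag d\<close>;
  \<open>S\<^sup>-\<^sup>1\<close> cancels \<open>S\<close> in the left block, and the last factor undoes the
  column scaling \<open>diag d\<close> that the right block picks up.\<close>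
lemma stack_mat_factorization:
  fixes S R :: "'a::field mat" and d :: "nat \<Rightarrow> 'a"
  assumes S: "S \<in> carrier_mat Q Q" "invertible_mat S" and R: "R \<in> carrier_mat n Q"
    and d: "\<And>i. 1 \<le> i \<Longrightarrow> i < n \<Longrightarrow> d i \<noteq> 0"
  shows "kron S (1\<^sub>m n) * kron (1\<^sub>m Q) (diagm n d)
      * hcat (kron (1\<^sub>m Q) R) (submatrix (Dmat R) UNIV {1..<n})
      * bdiag (kron (mat_inv S) (1\<^sub>m Q)) (1\<^sub>m (n - 1))
      * bdiag (1\<^sub>m (Q * Q)) (mat_inv (diagm (n - 1) (\<lambda>i. d (i + 1))))
    = stack_mat Q n S d R"
proof -
  define D where "D = diagm n d"
  define E where "E = submatrix (Dmat R) UNIV {1..<n}"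
  define F where "F = kron S D * E"
  define Y where "Y = submatrix (kron S (1\<^sub>m n) * Dmat R) UNIV {1..<n}"
  define D' where "D' = diagm (n - 1) (\<lambda>i. d (i + 1))"
  note S_inv = mat_inv_props[OF S]
  have dims: "dim_row E = n * Q" "dim_col E = n - 1" "dim_row F = Q * n" "dim_col F = n - 1"
    using S R by (simp_all add: E_def F_def D_def)
  have "F = submatrix (kron S D * Dmat R) UNIV {1..<n}"
    using S R unfolding F_def E_def by (intro mult_submatrix_cols) (simp add: D_def mult.commute)
  also have "\<dots> = submatrix (kron S (1\<^sub>m n) * Dmat R * D) UNIV {1..<n}"
    using kron_diagm_Dmat[OF S(1) R] by (simp add: D_def)
  also have "\<dots> = Y * D'"
    using R by (simp add: submatrix_mult_diagm_cols D_def Y_def D'_def)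
  finally have F: "F = Y * D'" .
  have Y: "Y \<in> carrier_mat (Q * n) (n - 1)"
    by (rule carrier_matI) (use S R in \<open>simp_all add: Y_def\<close>)
  have D'_inv: "D' * mat_inv D' = 1\<^sub>m (n - 1)"
    using d by (auto simp: D'_def mat_inv_diagm diagm_mult diagm_index intro!: eq_matI)
  have step_diag: "kron S (1\<^sub>m n) * kron (1\<^sub>m Q) D = kron S D"
    using S by (simp add: kron_mult D_def)
  have step_hcat: "kron S D * hcat (kron (1\<^sub>m Q) R) E = hcat (kron S (D * R)) F"
    using S R dims by (simp add: mult_hcat kron_mult F_def D_def mult.commute)
  have step_S_inv: "hcat (kron S (D * R)) F * bdiag (kron (mat_inv S) (1\<^sub>m Q)) (1\<^sub>m (n - 1))
      = hcat (kron (1\<^sub>m Q) (D * R)) F"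
  proof -
    have "kron S (D * R) * kron (mat_inv S) (1\<^sub>m Q) = kron (S * mat_inv S) (D * R * 1\<^sub>m Q)"
      using S S_inv R by (intro kron_mult) (simp_all add: D_def)
    also have "\<dots> = kron (1\<^sub>m Q) (D * R)"
      using S_inv R by (simp add: D_def)
    finally have "kron S (D * R) * kron (mat_inv S) (1\<^sub>m Q) = kron (1\<^sub>m Q) (D * R)" .
    moreover have "F * 1\<^sub>m (n - 1) = F" using dims by (intro right_mult_one_mat) auto
    ultimately show ?thesis using S S_inv R dims by (simp add: hcat_mult_bdiag D_def)
  qed
  have step_D_inv: "hcat (kron (1\<^sub>m Q) (D * R)) F * bdiag (1\<^sub>m (Q * Q)) (mat_inv D')
      = hcat (kron (1\<^sub>m Q) (D * R)) Y"
  proof -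
    have D'_inv_carrier: "mat_inv D' \<in> carrier_mat (n - 1) (n - 1)"
      using d by (simp add: D'_def mat_inv_diagm)
    have "F * mat_inv D' = Y * (D' * mat_inv D')"
      unfolding F using Y D'_inv_carrier by (intro assoc_mult_mat) (auto simp: D'_def)
    then have "F * mat_inv D' = Y" using Y D'_inv by simp
    then show ?thesis using R dims by (simp add: hcat_mult_bdiag D_def D'_def mat_inv_diagm d)
  qed
  show ?thesis
    unfolding stack_mat_def Y_def[symmetric] unfolding D_def[symmetric] E_def[symmetric] D'_def[symmetric]
    by (subst step_diag, subst step_hcat, subst step_S_inv, subst step_D_inv) (rule refl)
qed

definition selected_rows :: "nat \<Rightarrow> nat \<Rightarrow> nat set" where
  "selected_rows N Q = {0..<N} \<union> (\<Union>m\<in>{2..Q}. {(m-1)*N ..< (m-1)*N + Q + 1})"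

definition row_order :: "nat \<Rightarrow> nat \<Rightarrow> nat \<Rightarrow> nat" where
  "row_order N Q s = (if s < Q * (Q + 1) then (s div (Q + 1)) * N + s mod (Q + 1) else s + 1 - Q * Q)"

definition row_position :: "nat \<Rightarrow> nat \<Rightarrow> nat \<Rightarrow> nat" where
  "row_position N Q a = (if a < N \<and> Q < a then a + Q * Q - 1 else (a div N) * (Q + 1) + a mod N)"

lemma selected_rows_iff:
  "a \<in> selected_rows N Q \<longleftrightarrow> a < N \<or> (\<exists>m i. 1 \<le> m \<and> m < Q \<and> i \<le> Q \<and> a = m * N + i)"
proof
  assume "a \<in> selected_rows N Q"
  then consider "a < N" | m where "m \<in> {2..Q}" "(m - 1) * N \<le> a" "a < (m - 1) * N + Q + 1"
    unfolding selected_rows_def by auto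
  then show "a < N \<or> (\<exists>m i. 1 \<le> m \<and> m < Q \<and> i \<le> Q \<and> a = m * N + i)"
  proof cases
    case (2 m)
    then show ?thesis by (intro disjI2 exI[of _ "m - 1"] exI[of _ "a - (m - 1) * N"]) auto
  qed simp
next
  assume "a < N \<or> (\<exists>m i. 1 \<le> m \<and> m < Q \<and> i \<le> Q \<and> a = m * N + i)"
  then consider "a < N" | m i where "1 \<le> m" "m < Q" "i \<le> Q" "a = m * N + i" by blast
  then show "a \<in> selected_rows N Q"
  proof cases
    case (2 m i)
    then have "m + 1 \<in> {2..Q}" "a \<in> {(m + 1 - 1) * N ..< (m + 1 - 1) * N + Q + 1}" by auto
    then show ?thesis unfolding selected_rows_def by blast
  qed (simp add: selected_rows_def)
qed

lemma row_order_div_mod: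
  assumes "Q < N" "s < Q * Q + N - 1"
  shows "row_order N Q s div N = (if s < Q * (Q + 1) then s div (Q + 1) else 0)"
    and "row_order N Q s mod N = (if s < Q * (Q + 1) then s mod (Q + 1) else s + 1 - Q * Q)"
proof -
  have "s mod (Q + 1) < N" using assms(1) mod_less_divisor[of "Q + 1" s] by linarith
  moreover have "s + 1 - Q * Q < N" using assms by linarith
  ultimately show "row_order N Q s div N = (if s < Q * (Q + 1) then s div (Q + 1) else 0)"
    and "row_order N Q s mod N = (if s < Q * (Q + 1) then s mod (Q + 1) else s + 1 - Q * Q)"
    by (auto simp: row_order_def)
qed

lemma row_order_less:
  assumes "1 \<le> Q" "Q < N" "s < Q * Q + N - 1"
  shows "row_order N Q s < Q * N"
proof (cases "s < Q * (Q + 1)")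
  case True
  then have "s div (Q + 1) < Q" by (simp add: less_mult_imp_div_less)
  moreover have "s mod (Q + 1) < N" using assms(2) mod_less_divisor[of "Q + 1" s] by linarith
  ultimately show ?thesis using True by (simp add: row_order_def mult_add_less_mult)
next
  case False
  have "row_order N Q s = s + 1 - Q * Q" using False by (simp add: row_order_def)
  moreover have "s + 1 - Q * Q < N" using assms by linarith
  moreover have "N \<le> Q * N" using assms(1) by simp
  ultimately show ?thesis by linarith
qed

lemma row_position_block:
  assumes "1 \<le> m" "i \<le> Q" "Q < N"
  shows "row_position N Q (m * N + i) = m * (Q + 1) + i"
proof -
  have "N \<le> m * N" using assms(1) by simp
  then have "\<not> m * N + i < N" by linarith
  moreover have "(m * N + i) div N = m" "(m * N + i) mod N = i" using assms by (simp_all add: mult_add_div mult_add_mod)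
  ultimately show ?thesis by (simp add: row_position_def)
qed

text \<open>\<open>row_order\<close> enumerates \<open>J\<close> bijectively; in particular
  \<open>|J| = Q\<^sup>2+N-1\<close>, so the matrix of the theorem is square.\<close>
lemma bij_row_order:
  assumes Q: "1 \<le> Q" and N: "Q < N"
  shows "bij_betw (row_order N Q) {..<Q * Q + N - 1} (selected_rows N Q)"
proof (rule bij_betw_byWitness[where f' = "row_position N Q"])
  have QQ: "Q + 1 \<le> Q * (Q + 1)" using Q by simp
  show "\<forall>s\<in>{..<Q * Q + N - 1}. row_position N Q (row_order N Q s) = s"
  proof
    fix s assume "s \<in> {..<Q * Q + N - 1}"
    note dm = row_order_div_mod[OF N, of s] and ro = row_order_def[of N Q s]
    show "row_position N Q (row_order N Q s) = s"
    proof (cases "s < Q * (Q + 1)")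
      case True
      have not_tail: "\<not> (row_order N Q s < N \<and> Q < row_order N Q s)"
      proof
        assume "row_order N Q s < N \<and> Q < row_order N Q s"
        then have "s div (Q + 1) = 0" using dm True \<open>s \<in> _\<close> by simp
        then have "row_order N Q s = s mod (Q + 1)" using ro True by simp
        moreover have "s mod (Q + 1) < Q + 1" by simp
        ultimately show False using \<open>row_order N Q s < N \<and> Q < row_order N Q s\<close> by linarith
      qed
      have "row_position N Q (row_order N Q s) = (row_order N Q s div N) * (Q + 1) + row_order N Q s mod N"
        using not_tail unfolding row_position_def by (rule if_not_P)
      also have "\<dots> = (s div (Q + 1)) * (Q + 1) + s mod (Q + 1)"
        using dm True \<open>s \<in> _\<close> by simp
      also have "\<dots> = s" by (rule div_mult_mod_eq)
      finally show ?thesis .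
    next
      case False
      then have "row_order N Q s = s + 1 - Q * Q" "s + 1 - Q * Q < N" "Q < s + 1 - Q * Q"
        using \<open>s \<in> _\<close> ro by auto
      then show ?thesis by (simp add: row_position_def)
    qed
  qed
  show "\<forall>a\<in>selected_rows N Q. row_order N Q (row_position N Q a) = a"
  proof
    fix a assume "a \<in> selected_rows N Q"
    then consider "a < N" "Q < a" | "a \<le> Q" | m i where "1 \<le> m" "m < Q" "i \<le> Q" "a = m * N + i"
      unfolding selected_rows_iff by fastforce
    then show "row_order N Q (row_position N Q a) = a"
    proof cases
      case 1
      then show ?thesis by (simp add: row_position_def row_order_def)
    next
      case 2
      then have "a < Q * (Q + 1)" using QQ by linarith
      then show ?thesis using 2 N by (simp add: row_position_def row_order_def)
    next
      case (3 m i)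
      then have "row_position N Q a = m * (Q + 1) + i" using N by (simp add: row_position_block)
      moreover have "m * (Q + 1) + i < Q * (Q + 1)" using 3 by (intro mult_add_less_mult) auto
      moreover have "(m * (Q + 1) + i) div (Q + 1) = m" "(m * (Q + 1) + i) mod (Q + 1) = i"
        using \<open>i \<le> Q\<close> by (intro mult_add_div mult_add_mod; simp)+
      ultimately show ?thesis using 3 by (simp add: row_order_def)
    qed
  qed
  show "row_order N Q ` {..<Q * Q + N - 1} \<subseteq> selected_rows N Q"
  proof
    fix a assume "a \<in> row_order N Q ` {..<Q * Q + N - 1}"
    then obtain s where s: "s < Q * Q + N - 1" and a: "a = row_order N Q s" by auto
    show "a \<in> selected_rows N Q"
    proof (cases "s < Q * (Q + 1) \<and> s div (Q + 1) \<noteq> 0")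
      case True
      then have "s div (Q + 1) < Q" by (simp add: less_mult_imp_div_less)
      moreover have "s mod (Q + 1) \<le> Q" using mod_less_divisor[of "Q + 1" s] by linarith
      ultimately show ?thesis unfolding selected_rows_iff a row_order_def using True
        by (intro disjI2 exI[of _ "s div (Q + 1)"] exI[of _ "s mod (Q + 1)"]) auto
    next
      case False
      then have "a div N = 0" using row_order_div_mod(1)[OF N s] a by auto
      then have "a < N" using N by (simp add: div_eq_0_iff)
      then show ?thesis by (simp add: selected_rows_iff)
    qed
  qed
  show "row_position N Q ` selected_rows N Q \<subseteq> {..<Q * Q + N - 1}"
  proof
    fix b assume "b \<in> row_position N Q ` selected_rows N Q"
    then obtain a where a: "a \<in> selected_rows N Q" and b: "b = row_position N Q a" by auto
    from a consider "a < N" "Q < a" | "a \<le> Q" | m i where "1 \<le> m" "m < Q" "i \<le> Q" "a = m * N + i"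
      unfolding selected_rows_iff by fastforce
    then show "b \<in> {..<Q * Q + N - 1}"
    proof cases
      case 1
      then show ?thesis using b by (simp add: row_position_def)
    next
      case 2
      have "1 \<le> Q * Q" using Q by simp
      then have "a < Q * Q + N - 1" using 2 N by linarith
      moreover have "b = a" using 2 b N by (simp add: row_position_def)
      ultimately show ?thesis by simp
    next
      case (3 m i)
      then have "m * (Q + 1) + i < Q * (Q + 1)" by (intro mult_add_less_mult) auto
      moreover have "Q * (Q + 1) = Q * Q + Q" by simp
      moreover have "b = m * (Q + 1) + i" using 3 b N by (simp add: row_position_block)
      ultimately show ?thesis using N by simp
    qed
  qed
qed

lemma leading_rows_dims [simp]:
  "k \<le> dim_row A \<Longrightarrow> dim_row (submatrix A {0..<k} UNIV) = k"
  "dim_col (submatrix A {0..<k} UNIV) = dim_col A"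
proof -
  assume "k \<le> dim_row A"
  then have "{i. i < dim_row A \<and> i \<in> {0..<k}} = {0..<k}" by auto
  then show "dim_row (submatrix A {0..<k} UNIV) = k" by (simp add: dim_submatrix)
qed (simp add: dim_submatrix)

lemma leading_rows_index:
  assumes "i < k" "k \<le> dim_row A" "j < dim_col A"
  shows "submatrix A {0..<k} UNIV $$ (i,j) = A $$ (i,j)"
proof -
  have "{i. i < dim_row A \<and> i \<in> {0..<k}} = {0..<k}" using assms by auto
  then show ?thesis using assms pick_atLeastLessThan[of i k 0] by (simp add: submatrix_index pick_UNIV)
qed

lemma stack_mat_reordered:
  fixes S P :: "'a::comm_semiring_1 mat"
  assumes Q: "1 \<le> Q" and N: "Q < N" and S: "S \<in> carrier_mat Q Q" and P: "P \<in> carrier_mat N Q"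
  shows "mat (Q * Q + N - 1) (Q * Q + N - 1) (\<lambda>(s,c). stack_mat Q N S d P $$ (row_order N Q s, c)) =
    four_block_mat (stack_mat Q (Q + 1) S d (submatrix P {0..<Q+1} UNIV)) (0\<^sub>m (Q * (Q + 1)) (N - 1 - Q))
      (mat (N - 1 - Q) (Q * (Q + 1)) (\<lambda>(t,c). stack_mat Q N S d P $$ (row_order N Q (Q * (Q + 1) + t), c)))
      (diagm (N - 1 - Q) (\<lambda>t. \<Sum>u<Q. S $$ (0,u) * P $$ (Q + 1 + t, u)))"
    (is "?B = four_block_mat ?A _ ?C ?D")
proof -
  define Pt where "Pt = submatrix P {0..<Q+1} UNIV"
  have Pt: "Pt \<in> carrier_mat (Q + 1) Q" by (rule carrier_matI) (use P N in \<open>simp_all add: Pt_def\<close>)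
  have Pt_index: "Pt $$ (i,u) = P $$ (i,u)" if "i < Q + 1" "u < Q" for i u
    using that P N by (simp add: Pt_def leading_rows_index)
  have Pt_sum: "(\<Sum>u<Q. S $$ (k,u) * Pt $$ (i,u)) = (\<Sum>u<Q. S $$ (k,u) * P $$ (i,u))" if "i < Q + 1" for k i
    using that by (intro sum.cong) (simp_all add: Pt_index)
  have A: "?A \<in> carrier_mat (Q * (Q + 1)) (Q * Q + Q)"
    using stack_mat_carrier[OF S Pt] by (simp add: Pt_def)
  show ?thesis
  proof (rule eq_matI)
    fix s c assume "s < dim_row (four_block_mat ?A (0\<^sub>m (Q * (Q + 1)) (N - 1 - Q)) ?C ?D)"
      and "c < dim_col (four_block_mat ?A (0\<^sub>m (Q * (Q + 1)) (N - 1 - Q)) ?C ?D)"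
    then have s: "s < Q * Q + N - 1" and c: "c < Q * Q + N - 1" using A N by auto
    note dm = row_order_div_mod[OF N s]
    have G: "stack_mat Q N S d P $$ (row_order N Q s, c) =
      (if c < Q * Q then (if row_order N Q s div N = c div Q
          then d (row_order N Q s mod N) * P $$ (row_order N Q s mod N, c mod Q) else 0)
       else if row_order N Q s mod N = c + 1 - Q * Q
         then (\<Sum>u<Q. S $$ (row_order N Q s div N, u) * P $$ (c + 1 - Q * Q, u)) else 0)"
      using row_order_less[OF Q N s] c N by (intro stack_mat_index[OF S P]) auto
    show "?B $$ (s,c) = four_block_mat ?A (0\<^sub>m (Q * (Q + 1)) (N - 1 - Q)) ?C ?D $$ (s,c)"
    proof (cases "s < Q * (Q + 1)")
      case True
      show ?thesis
      proof (cases "c < Q * Q + Q")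
        case True
        have "?A $$ (s,c) = stack_mat Q (Q + 1) S d Pt $$ (s,c)" by (simp add: Pt_def)
        also have "\<dots> = (if c < Q * Q then (if s div (Q + 1) = c div Q
            then d (s mod (Q + 1)) * Pt $$ (s mod (Q + 1), c mod Q) else 0)
          else if s mod (Q + 1) = c + 1 - Q * Q
            then (\<Sum>u<Q. S $$ (s div (Q + 1), u) * Pt $$ (c + 1 - Q * Q, u)) else 0)"
          using \<open>s < Q * (Q + 1)\<close> True by (intro stack_mat_index[OF S Pt]) auto
        finally show ?thesis
          using \<open>s < Q * (Q + 1)\<close> True s c A G dm Q
          by (auto simp: Pt_index Pt_sum)
      next
        case False
        then have "s mod (Q + 1) \<noteq> c + 1 - Q * Q" using mod_less_divisor[of "Q + 1" s] by linarith
        then show ?thesis using \<open>s < Q * (Q + 1)\<close> False s c A G dm by auto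
      qed
    next
      case False
      show ?thesis
      proof (cases "c < Q * Q + Q")
        case True
        then show ?thesis using False s c A by simp
      next
        case c_large: False
        have "Q + 1 + (s - Q * (Q + 1)) = s + 1 - Q * Q" "Suc c - Q * Q = Suc (c - Q * Q)"
          using False c_large by simp_all
        then show ?thesis using False c_large s c A G dm by (auto simp: diagm_index)
      qed
    qed
  qed (use A N in auto)
qed

lemma det_selected_rows:
  fixes S P :: "complex mat"
  assumes Q: "1 \<le> Q" and N: "Q < N" and S: "S \<in> carrier_mat Q Q" and P: "P \<in> carrier_mat N Q"
  shows "cmod (det (submatrix (stack_mat Q N S d P) (selected_rows N Q) UNIV)) =
    (\<Prod>j\<in>{Q+1..<N}. cmod (\<Sum>q<Q. S $$ (0,q) * P $$ (j,q)))
    * cmod (det (stack_mat Q (Q + 1) S d (submatrix P {0..<Q+1} UNIV)))"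
proof -
  define G where "G = stack_mat Q N S d P"
  define A where "A = stack_mat Q (Q + 1) S d (submatrix P {0..<Q+1} UNIV)"
  define T where "T j = (\<Sum>q<Q. S $$ (0,q) * P $$ (j,q))" for j
  have G_carrier: "G \<in> carrier_mat (Q * N) (Q * Q + N - 1)"
    using stack_mat_carrier[OF S P] N by (simp add: G_def)
  have A_carrier: "A \<in> carrier_mat (Q * (Q + 1)) (Q * (Q + 1))"
  proof -
    have "submatrix P {0..<Q+1} UNIV \<in> carrier_mat (Q + 1) Q"
      by (rule carrier_matI) (use P N in simp_all)
    from stack_mat_carrier[OF S this] show ?thesis by (simp add: A_def algebra_simps)
  qed
  have rows: "selected_rows N Q \<subseteq> {..<dim_row G}"
  proof
    fix a assume "a \<in> selected_rows N Q"
    then obtain s where "s < Q * Q + N - 1" "a = row_order N Q s"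
      using bij_betw_imp_surj_on[OF bij_row_order[OF Q N]] by force
    then show "a \<in> {..<dim_row G}" using row_order_less[OF Q N] G_carrier by simp
  qed
  obtain p where p: "p permutes {0..<Q * Q + N - 1}"
    and det_reordered: "det (mat (Q * Q + N - 1) (Q * Q + N - 1) (\<lambda>(s,c). G $$ (row_order N Q s, c)))
      = signof p * det (submatrix G (selected_rows N Q) UNIV)"
    using det_rows_reindex[OF bij_row_order[OF Q N] rows] G_carrier by auto
  have "det (mat (Q * Q + N - 1) (Q * Q + N - 1) (\<lambda>(s,c). G $$ (row_order N Q s, c)))
      = det A * det (diagm (N - 1 - Q) (\<lambda>t. T (Q + 1 + t)))"
    unfolding G_def stack_mat_reordered[OF Q N S P] A_def[symmetric] T_def
    by (rule det_four_block_mat_upper_right_zero[OF A_carrier]) auto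
  also have "det (diagm (N - 1 - Q) (\<lambda>t. T (Q + 1 + t))) = (\<Prod>j\<in>{Q+1..<N}. T j)"
  proof -
    have "(\<Prod>j\<in>{Q+1..<N}. T j) = (\<Prod>t\<in>{0..<N - 1 - Q}. T (t + (Q + 1)))"
      using prod.shift_bounds_nat_ivl[of T 0 "Q + 1" "N - 1 - Q"] N by simp
    then show ?thesis by (simp add: det_diagm atLeast0LessThan add.commute)
  qed
  finally have "signof p * det (submatrix G (selected_rows N Q) UNIV) = det A * (\<Prod>j\<in>{Q+1..<N}. T j)"
    using det_reordered by simp
  then have "cmod (signof p :: complex) * cmod (det (submatrix G (selected_rows N Q) UNIV))
      = cmod (det A) * (\<Prod>j\<in>{Q+1..<N}. cmod (T j))"
    by (metis norm_mult prod_norm)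
  moreover have "cmod (signof p :: complex) = 1" by (simp add: sign_def)
  ultimately show ?thesis by (simp add: G_def A_def T_def mult.commute)
qed

text \<open>Step (3) for \<open>n = Q+1\<close>, where all five factors are square.\<close>
lemma det_stack_mat_factorization:
  fixes S R :: "'a::field mat" and d :: "nat \<Rightarrow> 'a"
  assumes S: "S \<in> carrier_mat Q Q" "invertible_mat S" and R: "R \<in> carrier_mat (Q + 1) Q"
    and d: "\<And>i. 1 \<le> i \<Longrightarrow> i \<le> Q \<Longrightarrow> d i \<noteq> 0"
  shows "det (stack_mat Q (Q + 1) S d R) =
      det (kron (1\<^sub>m Q) (diagm (Q + 1) d)) * det (kron S (1\<^sub>m (Q + 1)))
    * det (hcat (kron (1\<^sub>m Q) R) (submatrix (Dmat R) UNIV {1..<Q+1}))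
    * det (bdiag (kron (mat_inv S) (1\<^sub>m Q)) (1\<^sub>m Q))
    * det (bdiag (1\<^sub>m (Q^2)) (mat_inv (diagm Q (\<lambda>i. d (i + 1)))))"
    (is "_ = det ?M1 * det ?M2 * det ?M3 * det ?M4 * det ?M5")
proof -
  let ?n = "Q * (Q + 1)"
  have "stack_mat Q (Q + 1) S d R = ?M2 * ?M1 * ?M3 * ?M4 * ?M5"
    using stack_mat_factorization[OF S R, of d] d by (simp add: power2_eq_square)
  moreover have M1: "?M1 \<in> carrier_mat ?n ?n" and M2: "?M2 \<in> carrier_mat ?n ?n"
    and M3: "?M3 \<in> carrier_mat ?n ?n" and M4: "?M4 \<in> carrier_mat ?n ?n" and M5: "?M5 \<in> carrier_mat ?n ?n"
    using S R d mat_inv_props[OF S] by (auto intro!: carrier_matI simp: mat_inv_diagm power2_eq_square algebra_simps)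
  moreover have "det (?M2 * ?M1 * ?M3 * ?M4 * ?M5) = det ?M2 * det ?M1 * det ?M3 * det ?M4 * det ?M5"
  proof -
    note M21 = mult_carrier_mat[OF M2 M1]
    note M213 = mult_carrier_mat[OF M21 M3]
    note M2134 = mult_carrier_mat[OF M213 M4]
    show ?thesis by (simp only: det_mult[OF M2134 M5] det_mult[OF M213 M4] det_mult[OF M21 M3] det_mult[OF M2 M1])
  qed
  ultimately show ?thesis by (simp only: ac_simps)
qed

theorem mainTheorem5:
  fixes N Q :: nat and P S :: "complex mat" and x :: "complex vec"
  assumes "N \<ge> 2" and "1 \<le> Q" and "Q < N"
    and "P \<in> carrier_mat N Q"
    and "x \<in> carrier_vec N"
    and "\<And>i. 1 \<le> i \<Longrightarrow> i \<le> Q \<Longrightarrow> x $ i \<noteq> 0"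
    and "S \<in> carrier_mat Q Q" and "invertible_mat S"
  shows
    "(let X = diagm N (\<lambda>i. x $ i);
          J = {0..<N} \<union> (\<Union>m\<in>{2..Q}. {(m-1)*N ..< (m-1)*N + Q + 1});
          Pt = submatrix P {0..<Q+1} UNIV;
          Xt = diagm (Q+1) (\<lambda>i. x $ i);
          M1 = kron (1\<^sub>m Q) Xt;
          M2 = kron S (1\<^sub>m (Q+1));
          M3 = hcat (kron (1\<^sub>m Q) Pt) (submatrix (Dmat Pt) UNIV {1..<Q+1});
          M4 = bdiag (kron (mat_inv S) (1\<^sub>m Q)) (1\<^sub>m Q);
          M5 = bdiag (1\<^sub>m (Q^2)) (mat_inv (diagm Q (\<lambda>i. x $ (i+1))))
      in cmod (det (hcat (submatrix (kron (1\<^sub>m Q) (X * P)) J UNIV)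
                         (submatrix (kron S (1\<^sub>m N) * Dmat P) J {1..<N})))
         = (\<Prod>j\<in>{Q+1..<N}. cmod (\<Sum>q<Q. S $$ (0,q) * P $$ (j,q)))
           * (cmod (det M1) * cmod (det M2) * cmod (det M3) * cmod (det M4) * cmod (det M5)))"
proof -
  note Q = assms(2) and N = assms(3) and P = assms(4) and x = assms(6)
    and S = assms(7) and S_inv = assms(8)
  define Pt where "Pt = submatrix P {0..<Q+1} UNIV"
  have Pt: "Pt \<in> carrier_mat (Q + 1) Q" by (rule carrier_matI) (use P N in \<open>simp_all add: Pt_def\<close>)
  have selection:
    "hcat (submatrix (kron (1\<^sub>m Q) (diagm N (\<lambda>i. x $ i) * P)) (selected_rows N Q) UNIV)
          (submatrix (kron S (1\<^sub>m N) * Dmat P) (selected_rows N Q) {1..<N})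
     = submatrix (stack_mat Q N S (\<lambda>i. x $ i) P) (selected_rows N Q) UNIV"
    unfolding stack_mat_def submatrix_split[of "kron S (1\<^sub>m N) * Dmat P" "selected_rows N Q" "{1..<N}"]
    using P S by (intro hcat_submatrix_rows) simp
  have reduction: "cmod (det (submatrix (stack_mat Q N S (\<lambda>i. x $ i) P) (selected_rows N Q) UNIV))
      = (\<Prod>j\<in>{Q+1..<N}. cmod (\<Sum>q<Q. S $$ (0,q) * P $$ (j,q)))
        * cmod (det (stack_mat Q (Q + 1) S (\<lambda>i. x $ i) Pt))"
    using det_selected_rows[OF Q N S P] by (simp add: Pt_def)
  have factorization: "det (stack_mat Q (Q + 1) S (\<lambda>i. x $ i) Pt)
      = det (kron (1\<^sub>m Q) (diagm (Q + 1) (\<lambda>i. x $ i))) * det (kron S (1\<^sub>m (Q + 1)))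
      * det (hcat (kron (1\<^sub>m Q) Pt) (submatrix (Dmat Pt) UNIV {1..<Q+1}))
      * det (bdiag (kron (mat_inv S) (1\<^sub>m Q)) (1\<^sub>m Q))
      * det (bdiag (1\<^sub>m (Q^2)) (mat_inv (diagm Q (\<lambda>i. x $ (i + 1)))))"
    by (rule det_stack_mat_factorization[OF S S_inv Pt]) (use x in auto)
  show ?thesis
    unfolding Let_def selected_rows_def[symmetric] Pt_def[symmetric] selection reduction factorization
    by (simp add: norm_mult)
qed

end
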